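(* For every $M>1$ there exists $c=c(M)>0$ (depending only on $M$, not on $d$ or $T$) such that the following holds. Let $T$ be a directed tree on $[d]$ and let $X=(X_1,\dots,X_d)$ follow the linear structural equation model $X_k=\sum_{j}\beta_{kj}X_j+\eta_k$, where $\beta_{kj}\neq0$ only if $j$ is the parent of $k$ in $T$, and the $\eta_k\sim\mathcal{N}(0,\sigma_k^2)$ are mutually independent. If $|\beta_{kj}|\in[M^{-1},M]$ for every nonzero $\beta_{kj}$ and $\sigma_k^2\in[M^{-1},M]$ for every $k$, then the distribution $P$ of $X$ is $c$-strong tree-faithful to $T$.
   Context: A directed tree on $[d]$ is a directed graph with a root $u$ such that every other node is reached from $u$ by exactly one directed path (so non-root nodes have exactly one parent and there are no v-structures). For $\ell\in([d]\cup\{\emptyset\})\setminus\{j,k\}$, $\rho(X_j,X_k\mid X_\ell)$ denotes the partial correlation given $X_\ell$ (ordinary correlation if $\ell=\emptyset$). $P$ is $c$-strong tree-faithful to a polytree $T$ if (1) for every edge $j-k$ of $T$ and every $\ell\in([d]\cup\{\emptyset\})\setminus\{j,k\}$, $|\rho(X_j,X_k\mid X_\ell)|\ge c$; and (2) for every v-structure $k\to\ell\leftarrow j$ in $T$, $|\rho(X_k,X_j\mid X_\ell)|\ge c$. *)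

theory Defs
  imports Complex_Main
begin

text \<open>Vertices are 0,...,d-1 (the set [d]). A directed graph is a set E of pairs (j,k),
  meaning an edge j \<rightarrow> k.\<close>

definition directed_tree :: "nat \<Rightarrow> (nat \<times> nat) set \<Rightarrow> nat \<Rightarrow> bool" where
  "directed_tree d E u \<longleftrightarrow>
     u < d \<and> E \<subseteq> {..<d} \<times> {..<d} \<and>
     (\<forall>j. (j, u) \<notin> E) \<and>
     (\<forall>k<d. k \<noteq> u \<longrightarrow> (\<exists>!j. (j, k) \<in> E)) \<and>
     (\<forall>k<d. (u, k) \<in> E\<^sup>*)"

text \<open>Covariance matrix of X = (I - B)^{-1} eta with independent eta_a ~ N(0, s2 a):
  Lam is the matrix with X_k = sum_a Lam k a * eta_a, which is characterized by the
  structural equations X_k = sum_j beta k j X_j + eta_k.\<close>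

definition sem_solution :: "nat \<Rightarrow> (nat \<Rightarrow> nat \<Rightarrow> real) \<Rightarrow> (nat \<Rightarrow> nat \<Rightarrow> real) \<Rightarrow> bool" where
  "sem_solution d beta Lam \<longleftrightarrow>
     (\<forall>k<d. \<forall>a<d. Lam k a = (if k = a then 1 else 0) + (\<Sum>j<d. beta k j * Lam j a))"

definition sem_cov :: "nat \<Rightarrow> (nat \<Rightarrow> nat \<Rightarrow> real) \<Rightarrow> (nat \<Rightarrow> real) \<Rightarrow> nat \<Rightarrow> nat \<Rightarrow> real" where
  "sem_cov d Lam s2 j k = (\<Sum>a<d. Lam j a * Lam k a * s2 a)"

text \<open>Correlation and partial correlation given a single variable (None = empty set).\<close>

definition corr :: "(nat \<Rightarrow> nat \<Rightarrow> real) \<Rightarrow> nat \<Rightarrow> nat \<Rightarrow> real" where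
  "corr S j k = S j k / sqrt (S j j * S k k)"

definition pcov :: "(nat \<Rightarrow> nat \<Rightarrow> real) \<Rightarrow> nat \<Rightarrow> nat \<Rightarrow> nat \<Rightarrow> real" where
  "pcov S l j k = S j k - S j l * S l k / S l l"

fun pcorr :: "(nat \<Rightarrow> nat \<Rightarrow> real) \<Rightarrow> nat \<Rightarrow> nat \<Rightarrow> nat option \<Rightarrow> real" where
  "pcorr S j k None = corr S j k"
| "pcorr S j k (Some l) = pcov S l j k / sqrt (pcov S l j j * pcov S l k k)"

definition strong_tree_faithful ::
  "real \<Rightarrow> nat \<Rightarrow> (nat \<times> nat) set \<Rightarrow> (nat \<Rightarrow> nat \<Rightarrow> real) \<Rightarrow> bool" where
  "strong_tree_faithful c d E S \<longleftrightarrow>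
     (\<forall>j k. (j, k) \<in> E \<longrightarrow>
        (\<forall>l \<in> {None} \<union> Some ` ({..<d} - {j, k}). \<bar>pcorr S j k l\<bar> \<ge> c)) \<and>
     (\<forall>k j l. (k, l) \<in> E \<and> (j, l) \<in> E \<and> k \<noteq> j \<and> (k, j) \<notin> E \<and> (j, k) \<notin> E \<longrightarrow>
        \<bar>pcorr S k j (Some l)\<bar> \<ge> c)"

end

theory Submission
  imports Defs
begin

text \<open>\<open>Lam = (I - B)\<^sup>-\<^sup>1\<close>, so \<open>Lam l a\<close> is the product of the edge weights along the path from
  \<open>a\<close> to \<open>l\<close> (zero if there is none), and \<open>S = Lam diag(s2) Lam\<^sup>T\<close>. For an edge \<open>j \<rightarrow> k\<close> with
  weight \<open>b\<close> we have \<open>X\<^sub>k = b X\<^sub>j + \<eta>\<^sub>k\<close>, so the squared correlation of \<open>X\<^sub>j\<close> and \<open>X\<^sub>k\<close> is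
  \<open>b\<^sup>2 V / (b\<^sup>2 V + s2 k)\<close> with \<open>V = S j j\<close>. Conditioning on \<open>X\<^sub>l\<close> with \<open>l\<close> not below \<open>k\<close> keeps
  this form, with \<open>V\<close> replaced by the residual variance of \<open>X\<^sub>j\<close> given \<open>X\<^sub>l\<close>; conditioning on
  \<open>X\<^sub>l\<close> with \<open>l\<close> below \<open>k\<close> multiplies it by \<open>F / (g\<^sup>2 s2 k + F)\<close>, where \<open>g = Lam l k\<close> and \<open>F\<close>
  is the residual variance of \<open>X\<^sub>l\<close> given \<open>X\<^sub>k\<close>. Each residual variance is a weighted sum of
  squares of noise coefficients, hence bounded below by one or two of its terms, which are
  controlled by \<open>M\<close>; this gives \<open>c = 1/(2 M\<^sup>4)\<close>. Condition (2) of strong tree-faithfulness is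
  void since a directed tree has no v-structures.\<close>

lemma abs_divide_sqrt_ge:
  fixes x y c :: real
  assumes "0 < y" "0 \<le> c" "c\<^sup>2 * y \<le> x\<^sup>2"
  shows "c \<le> \<bar>x / sqrt y\<bar>"
proof -
  have "c * sqrt y = sqrt (c\<^sup>2 * y)" using assms by (simp add: real_sqrt_mult)
  also have "\<dots> \<le> \<bar>x\<bar>" using assms(3) real_sqrt_le_mono by fastforce
  finally show ?thesis using assms(1) by (simp add: abs_div pos_le_divide_eq)
qed

lemma weighted_squares_ge:
  fixes p q x :: real
  assumes "0 < p" "0 < q"
  shows "p * q / (p + q) \<le> p * (1 - x)\<^sup>2 + q * x\<^sup>2"
proof -
  have "(p + q) * (p * (1 - x)\<^sup>2 + q * x\<^sup>2) - p * q = (p - (p + q) * x)\<^sup>2"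
    by (simp add: algebra_simps power2_eq_square)
  then have "p * q \<le> (p + q) * (p * (1 - x)\<^sup>2 + q * x\<^sup>2)"
    by (metis diff_ge_0_iff_ge zero_le_power2)
  then show ?thesis using assms by (simp add: divide_le_eq mult.commute)
qed

lemma regression_corr_ge:
  fixes b W s q c :: real
  assumes "b \<noteq> 0" "0 < W" "0 \<le> s" "s \<le> q * (b\<^sup>2 * W)" "0 \<le> c" "c\<^sup>2 * (1 + q) \<le> 1"
  shows "c \<le> \<bar>b * W / sqrt (W * (b\<^sup>2 * W + s))\<bar>"
proof (rule abs_divide_sqrt_ge)
  have bW: "0 < b\<^sup>2 * W" using assms by simp
  then show "0 < W * (b\<^sup>2 * W + s)" using assms by (simp add: add_pos_nonneg)
  show "0 \<le> c" by fact
  have "c\<^sup>2 * (W * (b\<^sup>2 * W + s)) \<le> c\<^sup>2 * (W * ((1 + q) * (b\<^sup>2 * W)))"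
    using assms by (intro mult_left_mono) (auto simp: algebra_simps)
  also have "\<dots> = (c\<^sup>2 * (1 + q)) * (b\<^sup>2 * W * W)" by (simp add: algebra_simps)
  also have "\<dots> \<le> b\<^sup>2 * W * W" using assms bW by (simp add: mult_left_le_one_le)
  finally show "c\<^sup>2 * (W * (b\<^sup>2 * W + s)) \<le> (b * W)\<^sup>2" by (simp add: power2_eq_square mult_ac)
qed

lemma screened_corr_ge:
  fixes b V s g F L q r c :: real
  assumes "b \<noteq> 0" "0 < V" "0 < F" "0 < L" "0 \<le> s" "s \<le> q * (b\<^sup>2 * V)" "g\<^sup>2 * s \<le> r * F"
    and "0 \<le> c" "c\<^sup>2 * ((1 + q) * (1 + r)) \<le> 1"
  shows "c \<le> \<bar>(b * V * F / L) / sqrt (V * (g\<^sup>2 * s + F) / L * ((b\<^sup>2 * V + s) * F / L))\<bar>"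
proof (rule abs_divide_sqrt_ge)
  have bV: "0 < b\<^sup>2 * V" using assms by simp
  have gsF: "0 < g\<^sup>2 * s + F" using assms by (simp add: add_nonneg_pos)
  show "0 < V * (g\<^sup>2 * s + F) / L * ((b\<^sup>2 * V + s) * F / L)"
    using assms bV gsF by (simp add: add_pos_nonneg)
  show "0 \<le> c" by fact
  have "(g\<^sup>2 * s + F) * (b\<^sup>2 * V + s) \<le> ((1 + r) * F) * ((1 + q) * (b\<^sup>2 * V))"
    using assms bV gsF by (intro mult_mono) (auto simp: algebra_simps)
  then have "c\<^sup>2 * ((g\<^sup>2 * s + F) * (b\<^sup>2 * V + s)) \<le> c\<^sup>2 * (((1 + r) * F) * ((1 + q) * (b\<^sup>2 * V)))"
    by (rule mult_left_mono) simp
  also have "\<dots> = (c\<^sup>2 * ((1 + q) * (1 + r))) * (F * (b\<^sup>2 * V))" by (simp add: mult_ac)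
  also have "\<dots> \<le> F * (b\<^sup>2 * V)" using assms bV by (simp add: mult_left_le_one_le)
  finally have key: "c\<^sup>2 * ((g\<^sup>2 * s + F) * (b\<^sup>2 * V + s)) \<le> F * (b\<^sup>2 * V)" .
  have "c\<^sup>2 * (V * (g\<^sup>2 * s + F) / L * ((b\<^sup>2 * V + s) * F / L))
      = (V * F / L\<^sup>2) * (c\<^sup>2 * ((g\<^sup>2 * s + F) * (b\<^sup>2 * V + s)))"
    by (simp add: power2_eq_square field_simps)
  also have "\<dots> \<le> (V * F / L\<^sup>2) * (F * (b\<^sup>2 * V))"
    using key assms by (intro mult_left_mono) auto
  also have "\<dots> = (b * V * F / L)\<^sup>2" by (simp add: power2_eq_square field_simps)
  finally show "c\<^sup>2 * (V * (g\<^sup>2 * s + F) / L * ((b\<^sup>2 * V + s) * F / L)) \<le> (b * V * F / L)\<^sup>2" .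
qed

locale sem_tree =
  fixes d :: nat and E :: "(nat \<times> nat) set" and u :: nat
    and beta :: "nat \<Rightarrow> nat \<Rightarrow> real" and Lam :: "nat \<Rightarrow> nat \<Rightarrow> real"
  assumes tree: "directed_tree d E u"
    and beta_nonzero_iff: "\<forall>k<d. \<forall>j<d. beta k j \<noteq> 0 \<longleftrightarrow> (j, k) \<in> E"
    and solution: "sem_solution d beta Lam"
begin

lemma edge_less: "(j, k) \<in> E \<Longrightarrow> j < d \<and> k < d"
  using tree unfolding directed_tree_def by blast

lemma root_less: "u < d"
  using tree unfolding directed_tree_def by blast

lemma root_no_parent: "(j, u) \<notin> E"
  using tree unfolding directed_tree_def by blast

lemma root_reaches: "k < d \<Longrightarrow> (u, k) \<in> E\<^sup>*"
  using tree unfolding directed_tree_def by blast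

lemma parent_exists: "k < d \<Longrightarrow> k \<noteq> u \<Longrightarrow> \<exists>p. (p, k) \<in> E"
  using tree unfolding directed_tree_def by blast

lemma parent_unique: "(p, k) \<in> E \<Longrightarrow> (q, k) \<in> E \<Longrightarrow> p = q"
  using tree edge_less root_no_parent unfolding directed_tree_def by metis

lemma acyclic_edges: "acyclic E"
proof -
  have "(x, x) \<notin> E\<^sup>+" if "(u, x) \<in> E\<^sup>*" for x
    using that
  proof (induction rule: rtrancl_induct)
    case base
    show ?case using root_no_parent by (metis tranclE)
  next
    case (step y x)
    show ?case
    proof
      assume "(x, x) \<in> E\<^sup>+"
      then obtain z where z: "(x, z) \<in> E\<^sup>*" "(z, x) \<in> E" by (meson rtranclE tranclD2)
      with step.hyps(2) have "z = y" using parent_unique by blast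
      with z step.hyps(2) have "(y, y) \<in> E\<^sup>+" by (meson rtrancl_into_trancl2)
      with step.IH show False by blast
    qed
  qed
  moreover have "(x, x) \<in> E\<^sup>+ \<Longrightarrow> (u, x) \<in> E\<^sup>*" for x
    using edge_less root_reaches by (metis tranclE)
  ultimately show ?thesis unfolding acyclic_def by blast
qed

lemma trancl_no_return: "(a, b) \<in> E\<^sup>+ \<Longrightarrow> (b, a) \<notin> E\<^sup>*"
  using acyclic_edges unfolding acyclic_def by (meson trancl_rtrancl_trancl)

lemma lam_parent:
  assumes "(p, k) \<in> E" "a < d"
  shows "Lam k a = (if k = a then 1 else 0) + beta k p * Lam p a"
proof -
  have kd: "k < d" and pd: "p < d" using edge_less assms(1) by auto
  have "beta k j = 0" if "j < d" "j \<noteq> p" for j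
    using beta_nonzero_iff kd that parent_unique assms(1) by blast
  then have "(\<Sum>j<d. beta k j * Lam j a) = beta k p * Lam p a"
    using pd by (intro sum.mono_neutral_right[of "{..<d}" "{p}", simplified]) auto
  then show ?thesis using solution kd assms(2) unfolding sem_solution_def by auto
qed

lemma lam_root:
  assumes "a < d"
  shows "Lam u a = (if u = a then 1 else 0)"
proof -
  have "beta u j = 0" if "j < d" for j
    using beta_nonzero_iff root_less root_no_parent that by blast
  then show ?thesis using solution root_less assms unfolding sem_solution_def by simp
qed

lemma lam_nonzero_imp_ancestor:
  assumes "x < d" "a < d" "Lam x a \<noteq> 0"
  shows "(a, x) \<in> E\<^sup>*"
proof -
  have "(a, x) \<in> E\<^sup>*" if "(u, x) \<in> E\<^sup>*" "Lam x a \<noteq> 0" for x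
    using that
  proof (induction rule: rtrancl_induct)
    case base
    then show ?case using lam_root assms(2) by (auto split: if_splits)
  next
    case (step y x)
    then show ?case using lam_parent[OF step.hyps(2) assms(2)]
      by (cases "x = a") (auto intro: rtrancl_into_rtrancl)
  qed
  then show ?thesis using assms root_reaches by blast
qed

lemma lam_eq_0_if_not_ancestor: "x < d \<Longrightarrow> a < d \<Longrightarrow> (a, x) \<notin> E\<^sup>* \<Longrightarrow> Lam x a = 0"
  using lam_nonzero_imp_ancestor by blast

lemma lam_at_child_eq_0: "(j, k) \<in> E \<Longrightarrow> Lam j k = 0"
  using lam_eq_0_if_not_ancestor edge_less trancl_no_return by blast

lemma lam_diag:
  assumes "k < d"
  shows "Lam k k = 1"
proof (cases "k = u")
  case True
  then show ?thesis using lam_root assms by simp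
next
  case False
  then obtain p where "(p, k) \<in> E" using parent_exists assms by blast
  then show ?thesis using lam_parent assms lam_at_child_eq_0 by simp
qed

lemma lam_edge: "(j, k) \<in> E \<Longrightarrow> Lam k j = beta k j"
  using lam_parent edge_less lam_diag acyclic_edges by (fastforce simp: acyclic_def)

lemma lam_path_prod:
  assumes "(m, l) \<in> E\<^sup>*" "m < d" "a < d" "(m, a) \<notin> E\<^sup>+"
  shows "Lam l a = Lam l m * Lam m a"
  using assms(1)
proof (induction rule: rtrancl_induct)
  case base
  then show ?case using lam_diag assms by simp
next
  case (step y l)
  then have "(m, l) \<in> E\<^sup>+" by simp
  then have "l \<noteq> a" "l \<noteq> m" using assms(4) acyclic_edges by (auto simp: acyclic_def)
  then show ?case
    using lam_parent[OF step.hyps(2) assms(3)] lam_parent[OF step.hyps(2) assms(2)] step.IH by simp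
qed

lemma lam_via_child: "(j, m) \<in> E \<Longrightarrow> (m, l) \<in> E\<^sup>* \<Longrightarrow> Lam l j = Lam l m * beta m j"
  using lam_path_prod lam_edge edge_less trancl_no_return by (metis r_into_rtrancl trancl_into_rtrancl)

end

lemma sem_cov_sym: "sem_cov d Lam s2 j k = sem_cov d Lam s2 k j"
  unfolding sem_cov_def by (simp add: mult_ac)

lemma pcov_sem_cov_diag:
  fixes d :: nat and Lam :: "nat \<Rightarrow> nat \<Rightarrow> real" and s2 :: "nat \<Rightarrow> real"
  defines "S \<equiv> sem_cov d Lam s2"
  assumes "S l l \<noteq> 0"
  shows "pcov S l j j = (\<Sum>a<d. (Lam j a - S j l / S l l * Lam l a)\<^sup>2 * s2 a)"
proof -
  define t where "t = S j l / S l l"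
  have "(\<Sum>a<d. (Lam j a - t * Lam l a)\<^sup>2 * s2 a)
      = (\<Sum>a<d. Lam j a * Lam j a * s2 a - 2 * t * (Lam j a * Lam l a * s2 a)
                 + t\<^sup>2 * (Lam l a * Lam l a * s2 a))"
    by (rule sum.cong) (auto simp: algebra_simps power2_eq_square)
  also have "\<dots> = S j j - 2 * t * S j l + t\<^sup>2 * S l l"
    unfolding S_def sem_cov_def by (simp add: sum.distrib sum_subtractf sum_distrib_left)
  also have "\<dots> = pcov S l j j"
    using assms(2) sem_cov_sym[of d Lam s2 l j]
    unfolding pcov_def t_def S_def by (simp add: field_simps power2_eq_square)
  finally show ?thesis unfolding t_def by simp
qed

locale sem_tree_bounded = sem_tree +
  fixes s2 :: "nat \<Rightarrow> real" and M :: real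
  assumes beta_bounds: "\<forall>k<d. \<forall>j<d. beta k j \<noteq> 0 \<longrightarrow> \<bar>beta k j\<bar> \<in> {1/M..M}"
    and s2_bounds: "\<forall>k<d. s2 k \<in> {1/M..M}"
    and M_gt_1: "M > 1"
begin

abbreviation S :: "nat \<Rightarrow> nat \<Rightarrow> real" where
  "S \<equiv> sem_cov d Lam s2"

lemma M_pos: "M > 0"
  using M_gt_1 by simp

lemma residual_bound_pos: "0 < 1/(M * (M\<^sup>2 + 1))"
  using M_pos by (simp add: add_pos_nonneg)

lemma residual_bound_le_inverse: "1/(M * (M\<^sup>2 + 1)) \<le> 1/M"
  using M_pos by (simp add: frac_le mult_le_cancel_left1 add_pos_nonneg)

lemma s2_ge: "a < d \<Longrightarrow> 1/M \<le> s2 a"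
  using s2_bounds by auto

lemma s2_le: "a < d \<Longrightarrow> s2 a \<le> M"
  using s2_bounds by auto

lemma s2_pos: "a < d \<Longrightarrow> 0 < s2 a"
  using s2_ge M_pos by (meson divide_pos_pos less_le_trans zero_less_one)

lemma edge_weight_bounds:
  assumes "(j, k) \<in> E"
  shows "beta k j \<noteq> 0" "1/M\<^sup>2 \<le> (beta k j)\<^sup>2" "(beta k j)\<^sup>2 \<le> M\<^sup>2"
proof -
  have jk: "j < d" "k < d" using edge_less assms by auto
  show "beta k j \<noteq> 0" using beta_nonzero_iff jk assms by auto
  then have b: "1/M \<le> \<bar>beta k j\<bar>" "\<bar>beta k j\<bar> \<le> M" using beta_bounds jk by auto
  have "(1/M)\<^sup>2 \<le> \<bar>beta k j\<bar>\<^sup>2" using b M_pos by (intro power_mono) auto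
  then show "1/M\<^sup>2 \<le> (beta k j)\<^sup>2" by (simp add: power_divide)
  have "\<bar>beta k j\<bar>\<^sup>2 \<le> M\<^sup>2" using b by (intro power_mono) auto
  then show "(beta k j)\<^sup>2 \<le> M\<^sup>2" by simp
qed

lemma sum_sq_s2_mono:
  "A \<subseteq> {..<d} \<Longrightarrow> (\<Sum>a\<in>A. (v a)\<^sup>2 * s2 a) \<le> (\<Sum>a<d. (v a)\<^sup>2 * s2 a)"
  by (intro sum_mono2) (auto intro!: mult_nonneg_nonneg simp: less_imp_le s2_pos)

lemma cov_diag_ge:
  assumes "x < d"
  shows "1/M \<le> S x x"
proof -
  have "1/M \<le> (Lam x x)\<^sup>2 * s2 x" using lam_diag s2_ge assms by simp
  also have "\<dots> \<le> (\<Sum>a<d. (Lam x a)\<^sup>2 * s2 a)" using sum_sq_s2_mono[of "{x}"] assms by simp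
  also have "\<dots> = S x x" unfolding sem_cov_def by (simp add: power2_eq_square)
  finally show ?thesis .
qed

lemma cov_diag_pos: "x < d \<Longrightarrow> 0 < S x x"
  using cov_diag_ge M_pos by (meson divide_pos_pos less_le_trans zero_less_one)

lemma cov_edge:
  assumes "(j, k) \<in> E" "x < d"
  shows "S k x = Lam x k * s2 k + beta k j * S j x"
proof -
  have kd: "k < d" using edge_less assms by auto
  have "S k x = (\<Sum>a<d. (if k = a then Lam x a * s2 a else 0) + beta k j * (Lam j a * Lam x a * s2 a))"
    unfolding sem_cov_def by (rule sum.cong) (auto simp: lam_parent[OF assms(1)] algebra_simps)
  also have "\<dots> = Lam x k * s2 k + beta k j * S j x"
    unfolding sem_cov_def by (simp add: sum.distrib sum_distrib_left kd)
  finally show ?thesis .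
qed

lemma two_noise_terms_ge:
  assumes jd: "j < d" and md: "m < d" and xy: "x\<^sup>2 \<le> M\<^sup>2 * y\<^sup>2"
  shows "1/(M * (M\<^sup>2 + 1)) \<le> (1 - x)\<^sup>2 * s2 j + y\<^sup>2 * s2 m"
proof -
  have "1/(M * (M\<^sup>2 + 1)) = (1/M) * (1/M^3) / (1/M + 1/M^3)"
    using M_pos by (simp add: field_simps power_numeral_reduce)
  also have "\<dots> \<le> (1/M) * (1 - x)\<^sup>2 + (1/M^3) * x\<^sup>2"
    using M_pos by (intro weighted_squares_ge) auto
  also have "\<dots> \<le> (1 - x)\<^sup>2 * s2 j + y\<^sup>2 * s2 m"
  proof (rule add_mono)
    show "1/M * (1 - x)\<^sup>2 \<le> (1 - x)\<^sup>2 * s2 j"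
      using mult_right_mono[OF s2_ge[OF jd], of "(1 - x)\<^sup>2"] by (simp add: mult.commute)
    have "x\<^sup>2 / M\<^sup>2 \<le> y\<^sup>2" using xy M_pos by (simp add: divide_le_eq mult.commute)
    then have "(x\<^sup>2 / M\<^sup>2) * (1/M) \<le> y\<^sup>2 * s2 m"
      using s2_ge[OF md] M_pos by (intro mult_mono) auto
    then show "1/M^3 * x\<^sup>2 \<le> y\<^sup>2 * s2 m" by (simp add: power_numeral_reduce)
  qed
  finally show ?thesis .
qed

text \<open>The residual \<open>X\<^sub>j - t X\<^sub>l\<close> contains the noise of \<open>j\<close> with coefficient \<open>1 - t Lam l j\<close> and,
  when \<open>j\<close> lies above \<open>l\<close>, the noise of the child \<open>m\<close> of \<open>j\<close> towards \<open>l\<close> with coefficient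
  \<open>-t Lam l m\<close>; since \<open>Lam l j = Lam l m * beta m j\<close>, these cannot both be small.\<close>

lemma pcov_diag_ge:
  assumes jd: "j < d" and ld: "l < d" and lj: "l \<noteq> j"
  shows "1/(M * (M\<^sup>2 + 1)) \<le> pcov S l j j"
proof -
  define t where "t = S j l / S l l"
  define r where "r a = Lam j a - t * Lam l a" for a
  have pcov_eq: "pcov S l j j = (\<Sum>a<d. (r a)\<^sup>2 * s2 a)"
    unfolding r_def t_def using pcov_sem_cov_diag cov_diag_pos[OF ld] by simp
  show ?thesis
  proof (cases "Lam l j = 0")
    case True
    then have "1/M \<le> (r j)\<^sup>2 * s2 j" unfolding r_def using lam_diag s2_ge jd by simp
    also have "\<dots> \<le> pcov S l j j" using sum_sq_s2_mono[of "{j}"] jd pcov_eq by simp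
    finally show ?thesis using residual_bound_le_inverse by linarith
  next
    case False
    then have "(j, l) \<in> E\<^sup>+" using lam_nonzero_imp_ancestor ld jd lj by (auto dest: rtranclD)
    then obtain m where m: "(j, m) \<in> E" "(m, l) \<in> E\<^sup>*" by (meson tranclD)
    have md: "m < d" and mj: "m \<noteq> j" using m edge_less acyclic_edges by (auto simp: acyclic_def)
    define x where "x = t * Lam l j"
    have rj: "r j = 1 - x" unfolding r_def x_def using lam_diag jd by simp
    have rm: "r m = - (t * Lam l m)" unfolding r_def using lam_at_child_eq_0 m(1) by simp
    have "x\<^sup>2 = (t * Lam l m)\<^sup>2 * (beta m j)\<^sup>2"
      unfolding x_def lam_via_child[OF m] by (simp add: power_mult_distrib)
    also have "\<dots> \<le> (t * Lam l m)\<^sup>2 * M\<^sup>2"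
      using edge_weight_bounds(3)[OF m(1)] by (intro mult_left_mono) auto
    finally have x2: "x\<^sup>2 \<le> M\<^sup>2 * (r m)\<^sup>2" using rm by (simp add: mult.commute)
    have "1/(M * (M\<^sup>2 + 1)) \<le> (r j)\<^sup>2 * s2 j + (r m)\<^sup>2 * s2 m"
      using two_noise_terms_ge[OF jd md x2] rj by simp
    also have "\<dots> \<le> pcov S l j j"
      using sum_sq_s2_mono[of "{j, m}" r] jd md mj pcov_eq by simp
    finally show ?thesis .
  qed
qed

text \<open>The part \<open>X\<^sub>l - Lam l k X\<^sub>k\<close> of \<open>X\<^sub>l\<close> consists of noises strictly below \<open>k\<close>, which do
  not enter the ancestors \<open>y\<close> of \<open>k\<close>.\<close>

lemma cov_screen:
  assumes yk: "(y, k) \<in> E\<^sup>*" and kl: "(k, l) \<in> E\<^sup>*" and yd: "y < d" and kd: "k < d"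
  shows "S y l = Lam l k * S y k"
proof -
  have orth: "Lam y a * (Lam l a - Lam l k * Lam k a) = 0" if ad: "a < d" for a
  proof (cases "(k, a) \<in> E\<^sup>+")
    case True
    then have "(a, y) \<notin> E\<^sup>*" using trancl_no_return rtrancl_trans[OF _ yk] by blast
    then have "Lam y a = 0" using lam_eq_0_if_not_ancestor yd ad by blast
    then show ?thesis by simp
  next
    case False
    then have "Lam l a = Lam l k * Lam k a" by (rule lam_path_prod[OF kl kd ad])
    then show ?thesis by simp
  qed
  have "S y l - Lam l k * S y k
      = (\<Sum>a<d. Lam y a * Lam l a * s2 a - Lam l k * (Lam y a * Lam k a * s2 a))"
    unfolding sem_cov_def by (simp add: sum_subtractf sum_distrib_left)
  also have "\<dots> = (\<Sum>a<d. Lam y a * (Lam l a - Lam l k * Lam k a) * s2 a)"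
    by (rule sum.cong) (simp_all add: algebra_simps)
  also have "\<dots> = 0" by (rule sum.neutral) (simp add: orth)
  finally show ?thesis by simp
qed

lemma pcov_diag_below_ge:
  assumes km: "(k, m) \<in> E" and ml: "(m, l) \<in> E\<^sup>*" and ld: "l < d"
  shows "(Lam l k)\<^sup>2 / M^3 \<le> pcov S k l l"
proof -
  have kd: "k < d" and md: "m < d" using edge_less km by auto
  have "(k, l) \<in> E\<^sup>*" using km ml by (simp add: converse_rtrancl_into_rtrancl)
  then have "S l k = Lam l k * S k k"
    using cov_screen[of k k l] sem_cov_sym kd by simp
  then have pcov_eq: "pcov S k l l = (\<Sum>a<d. (Lam l a - Lam l k * Lam k a)\<^sup>2 * s2 a)"
    using pcov_sem_cov_diag cov_diag_pos[OF kd] by simp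
  have "(Lam l k)\<^sup>2 / M^3 = (Lam l m)\<^sup>2 * (beta m k)\<^sup>2 / M\<^sup>2 * (1/M)"
    unfolding lam_via_child[OF km ml] by (simp add: power2_eq_square power3_eq_cube mult_ac)
  also have "\<dots> \<le> (Lam l m)\<^sup>2 * s2 m"
    using edge_weight_bounds(3)[OF km] s2_ge[OF md] M_pos
    by (intro mult_mono) (auto simp: divide_le_eq mult_left_mono)
  also have "\<dots> = (Lam l m - Lam l k * Lam k m)\<^sup>2 * s2 m"
    using lam_at_child_eq_0 km by simp
  also have "\<dots> \<le> pcov S k l l"
    using sum_sq_s2_mono[of "{m}"] md pcov_eq by simp
  finally show ?thesis .
qed

lemma cov_edge_parent: "(j, k) \<in> E \<Longrightarrow> S j k = beta k j * S j j"
  using cov_edge[of j k j] lam_at_child_eq_0 edge_less sem_cov_sym by simp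

lemma cov_edge_child: "(j, k) \<in> E \<Longrightarrow> S k k = (beta k j)\<^sup>2 * S j j + s2 k"
  using cov_edge[of j k k] cov_edge_parent lam_diag edge_less by (simp add: power2_eq_square)

lemma edge_regression_ge:
  assumes jk: "(j, k) \<in> E" and W: "1/(M * (M\<^sup>2 + 1)) \<le> W"
  shows "1/(2 * M^4) \<le> \<bar>beta k j * W / sqrt (W * ((beta k j)\<^sup>2 * W + s2 k))\<bar>"
proof (rule regression_corr_ge)
  have kd: "k < d" using edge_less jk by simp
  show "beta k j \<noteq> 0" using edge_weight_bounds(1)[OF jk] .
  show "0 < W" using W residual_bound_pos by linarith
  show "0 \<le> s2 k" using s2_pos[OF kd] by simp
  show "0 \<le> 1/(2 * M^4)" using M_pos by simp
  have "0 < M\<^sup>2 + 1" by (simp add: add_nonneg_pos)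
  then have "s2 k \<le> M^4 * (M\<^sup>2 + 1) * ((1/M\<^sup>2) * (1/(M * (M\<^sup>2 + 1))))"
    using s2_le[OF kd] M_pos by (simp add: power_numeral_reduce)
  also have "\<dots> \<le> M^4 * (M\<^sup>2 + 1) * ((beta k j)\<^sup>2 * W)"
    using edge_weight_bounds(2)[OF jk] W M_pos
    by (intro mult_left_mono mult_mono) (auto simp: add_pos_nonneg)
  finally show "s2 k \<le> M^4 * (M\<^sup>2 + 1) * ((beta k j)\<^sup>2 * W)" .
  have "1 \<le> M^8" "M^4 \<le> M^8" "M^6 \<le> M^8"
    using M_gt_1 by (auto intro: one_le_power power_increasing)
  then have "1 + M^4 * (M\<^sup>2 + 1) \<le> 4 * M^8" by (simp add: algebra_simps flip: power_add)
  moreover have "0 < 4 * M^8" using M_pos by simp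
  ultimately show "(1/(2 * M^4))\<^sup>2 * (1 + M^4 * (M\<^sup>2 + 1)) \<le> 1"
    by (simp add: power_divide divide_le_eq flip: power_mult)
qed

lemma edge_corr_ge:
  assumes jk: "(j, k) \<in> E"
  shows "1/(2 * M^4) \<le> \<bar>pcorr S j k None\<bar>"
proof -
  have jd: "j < d" using edge_less jk by simp
  have "1/(M * (M\<^sup>2 + 1)) \<le> S j j" using cov_diag_ge[OF jd] residual_bound_le_inverse by linarith
  then show ?thesis
    using edge_regression_ge[OF jk] cov_edge_parent[OF jk] cov_edge_child[OF jk]
    by (simp add: corr_def)
qed

lemma edge_pcorr_not_below_ge:
  assumes jk: "(j, k) \<in> E" and ld: "l < d" and lj: "l \<noteq> j" and lk: "l \<noteq> k"
    and not_below: "(k, l) \<notin> E\<^sup>+"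
  shows "1/(2 * M^4) \<le> \<bar>pcorr S j k (Some l)\<bar>"
proof -
  have jd: "j < d" and kd: "k < d" using edge_less jk by auto
  define b where "b = beta k j"
  define W where "W = pcov S l j j"
  have "(k, l) \<notin> E\<^sup>*" using not_below lk by (auto dest: rtranclD)
  then have "S k l = b * S j l"
    using cov_edge[OF jk ld] lam_eq_0_if_not_ancestor[OF ld kd] unfolding b_def by simp
  then have "pcov S l j k = b * W" "pcov S l k k = b\<^sup>2 * W + s2 k"
    using cov_edge_parent[OF jk] cov_edge_child[OF jk] cov_diag_pos[OF ld] sem_cov_sym
    unfolding W_def b_def pcov_def by (simp_all add: field_simps power2_eq_square)
  moreover have "1/(M * (M\<^sup>2 + 1)) \<le> W" unfolding W_def using pcov_diag_ge jd ld lj by simp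
  ultimately show ?thesis using edge_regression_ge[OF jk] unfolding W_def b_def by simp
qed

lemma pcorr_edge_below_eq:
  assumes jk: "(j, k) \<in> E" and below: "(k, l) \<in> E\<^sup>+" and ld: "l < d"
  defines "b \<equiv> beta k j" and "V \<equiv> S j j" and "g \<equiv> Lam l k" and "F \<equiv> pcov S k l l"
    and "L \<equiv> (Lam l k)\<^sup>2 * ((beta k j)\<^sup>2 * S j j + s2 k) + pcov S k l l"
  shows "0 < L"
    and "pcorr S j k (Some l)
      = (b * V * F / L) / sqrt (V * (g\<^sup>2 * s2 k + F) / L * ((b\<^sup>2 * V + s2 k) * F / L))"
proof -
  have jd: "j < d" and kd: "k < d" using edge_less jk by auto
  have kl: "(k, l) \<in> E\<^sup>*" using below by simp
  define K where "K = b\<^sup>2 * V + s2 k"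
  have L_eq: "L = g\<^sup>2 * K + F" unfolding L_def K_def b_def V_def g_def F_def ..
  have Sjk: "S j k = b * V" and Skk: "S k k = K"
    unfolding b_def V_def K_def using cov_edge_parent[OF jk] cov_edge_child[OF jk] by auto
  have Sjl: "S j l = g * (b * V)"
    using cov_screen[OF r_into_rtrancl[OF jk] kl jd kd] Sjk unfolding g_def by simp
  have Skl: "S k l = g * K"
    using cov_screen[of k k l] kl kd Skk unfolding g_def by simp
  have Sll: "S l l = L"
    using Skl Skk cov_diag_pos[OF kd] sem_cov_sym[of d Lam s2 l k]
    unfolding L_eq F_def pcov_def by (simp add: field_simps power2_eq_square)
  then show Lpos: "0 < L" using cov_diag_pos[OF ld] by simp
  have "pcov S l j k = b * V * F / L" "pcov S l j j = V * (g\<^sup>2 * s2 k + F) / L"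
    "pcov S l k k = K * F / L"
    using Sjk Skk Sjl Skl Sll Lpos sem_cov_sym[of d Lam s2 l j] sem_cov_sym[of d Lam s2 l k]
    unfolding pcov_def V_def L_eq K_def by (simp_all add: field_simps power2_eq_square)
  then show "pcorr S j k (Some l)
      = (b * V * F / L) / sqrt (V * (g\<^sup>2 * s2 k + F) / L * ((b\<^sup>2 * V + s2 k) * F / L))"
    unfolding K_def by simp
qed

lemma edge_pcorr_below_ge:
  assumes jk: "(j, k) \<in> E" and below: "(k, l) \<in> E\<^sup>+" and ld: "l < d"
  shows "1/(2 * M^4) \<le> \<bar>pcorr S j k (Some l)\<bar>"
  unfolding pcorr_edge_below_eq(2)[OF assms]
proof (rule screened_corr_ge)
  have jd: "j < d" and kd: "k < d" using edge_less jk by auto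
  obtain m where km: "(k, m) \<in> E" and ml: "(m, l) \<in> E\<^sup>*" using below by (meson tranclD)
  have lk: "l \<noteq> k" using below acyclic_edges by (auto simp: acyclic_def)
  show "beta k j \<noteq> 0" using edge_weight_bounds(1)[OF jk] .
  show "0 < S j j" using cov_diag_pos[OF jd] .
  show "0 < pcov S k l l" using less_le_trans[OF residual_bound_pos pcov_diag_ge[of l k]] ld kd lk by blast
  show "0 < (Lam l k)\<^sup>2 * ((beta k j)\<^sup>2 * S j j + s2 k) + pcov S k l l"
    using pcorr_edge_below_eq(1)[OF assms] .
  show "0 \<le> s2 k" "0 \<le> 1/(2 * M^4)" using s2_pos[OF kd] M_pos by auto
  have "1/M^3 = (1/M\<^sup>2) * (1/M)" by (simp add: power_numeral_reduce)
  also have "\<dots> \<le> (beta k j)\<^sup>2 * S j j"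
    using edge_weight_bounds(2)[OF jk] cov_diag_ge[OF jd] M_pos by (intro mult_mono) auto
  finally have "M \<le> M^4 * ((beta k j)\<^sup>2 * S j j)"
    using M_pos by (simp add: power_numeral_reduce divide_le_eq mult_ac)
  then show "s2 k \<le> M^4 * ((beta k j)\<^sup>2 * S j j)" using s2_le[OF kd] by linarith
  have "(Lam l k)\<^sup>2 * s2 k \<le> (Lam l k)\<^sup>2 * M" using s2_le[OF kd] by (simp add: mult_left_mono)
  also have "\<dots> = M^4 * ((Lam l k)\<^sup>2 / M^3)" using M_pos by (simp add: power_numeral_reduce)
  also have "\<dots> \<le> M^4 * pcov S k l l"
    using pcov_diag_below_ge[OF km ml ld] M_pos by (intro mult_left_mono) auto
  finally show "(Lam l k)\<^sup>2 * s2 k \<le> M^4 * pcov S k l l" .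
  have "(1 + M^4)\<^sup>2 \<le> (2 * M^4)\<^sup>2" using M_gt_1 by (intro power_mono) (auto simp: one_le_power)
  moreover have "0 < (2 * M^4)\<^sup>2" using M_pos by simp
  ultimately show "(1/(2 * M^4))\<^sup>2 * ((1 + M^4) * (1 + M^4)) \<le> 1"
    by (simp add: power_divide divide_le_eq power2_eq_square)
qed

lemma edge_pcorr_ge:
  assumes jk: "(j, k) \<in> E" and l: "l \<in> {None} \<union> Some ` ({..<d} - {j, k})"
  shows "1/(2 * M^4) \<le> \<bar>pcorr S j k l\<bar>"
  using l edge_corr_ge[OF jk] edge_pcorr_below_ge[OF jk] edge_pcorr_not_below_ge[OF jk] by blast

end

theorem lemma1:
  fixes M :: real
  assumes "M > 1"
  shows "\<exists>c>0. \<forall>(d::nat) E u (beta::nat \<Rightarrow> nat \<Rightarrow> real) (s2::nat \<Rightarrow> real) Lam.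
           directed_tree d E u \<longrightarrow>
           (\<forall>k<d. \<forall>j<d. beta k j \<noteq> 0 \<longleftrightarrow> (j, k) \<in> E) \<longrightarrow>
           (\<forall>k<d. \<forall>j<d. beta k j \<noteq> 0 \<longrightarrow> \<bar>beta k j\<bar> \<in> {1/M..M}) \<longrightarrow>
           (\<forall>k<d. s2 k \<in> {1/M..M}) \<longrightarrow>
           sem_solution d beta Lam \<longrightarrow>
           strong_tree_faithful c d E (sem_cov d Lam s2)"
proof (intro exI[of _ "1/(2 * M^4)"] conjI allI impI)
  show "0 < 1/(2 * M^4)" using assms by simp
  fix d E u beta s2 Lam
  assume "directed_tree d E u" "\<forall>k<d. \<forall>j<d. beta k j \<noteq> 0 \<longleftrightarrow> (j, k) \<in> E"
    "\<forall>k<d. \<forall>j<d. beta k j \<noteq> 0 \<longrightarrow> \<bar>beta k j\<bar> \<in> {1/M..M}" "\<forall>k<d. s2 k \<in> {1/M..M}"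
    "sem_solution d beta Lam"
  then interpret sem_tree_bounded d E u beta Lam s2 M
    using assms by unfold_locales
  show "strong_tree_faithful (1/(2 * M^4)) d E S"
    unfolding strong_tree_faithful_def using edge_pcorr_ge parent_unique by blast
qed

end
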